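(* For every integer $p\ge0$, $$\sum_{k=1}^\infty\frac{1}{(6k-1)(6k)^{2p+1}(6k+1)}-\frac12\left(\sum_{k=1}^\infty\frac{1}{(6k+1)(6k+2)^{2p+1}(6k+3)}+\sum_{k=1}^\infty\frac{1}{(6k+3)(6k+4)^{2p+1}(6k+5)}\right)$$ $$=\frac13\cdot\frac{1}{2^{2p+2}}+\frac1{15}\cdot\frac{1}{2^{4p+3}}-\frac12+\frac38\ln 3+\frac14\sum_{j=1}^p\frac{1-3^{-2j}}{2^{2j}}\zeta(2j+1),$$ and $$\sum_{k=0}^\infty\frac{1}{(6k+1)(6k+2)^{2p+1}(6k+3)}-\sum_{k=0}^\infty\frac{1}{(6k+3)(6k+4)^{2p+1}(6k+5)}=\frac{\sqrt3\,\pi}{36}-\frac{\sqrt3}{3}\sum_{j=1}^p\frac{(-1)^{j+1}\pi^{2j+1}}{(2j+1)!}B_{2j+1}(1/3).$$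
   Context: $\zeta$ is the Riemann zeta function; $B_n(y)$ are the Bernoulli polynomials, defined by $\frac{te^{yt}}{e^t-1}=\sum_{k\ge0}B_k(y)\frac{t^k}{k!}$. Empty sums are $0$. *)

theory Defs
  imports "HOL-Analysis.Analysis" "HOL-Computational_Algebra.Formal_Power_Series"
begin

text \<open>Riemann zeta function at integer arguments s, via its Dirichlet series
  (only used here at s = 2j+1 >= 3, where the series converges).\<close>
definition riemann_zeta :: "nat \<Rightarrow> real" where
  "riemann_zeta s = (\<Sum>k. 1 / real (k + 1) ^ s)"

definition bernpoly :: "nat \<Rightarrow> real \<Rightarrow> real" where
  "bernpoly n y = fact n * fps_nth (fps_X * fps_exp y / (fps_exp 1 - 1)) n"

end

(*
  Partial fractions, 1/((n-1) n^(2p+1) (n+1)) = 1/((n-1) n (n+1)) - sum_{j=1..p} 1/n^(2j+1),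
  reduce both identities to the case p = 0 together with the power sums sum_k 1/(6k+r)^(2j+1).

  For p = 0 the summands are combinations of the 1/(6k+i). The second identity then follows from
  the reflection formula psi(1-x) - psi(x) = pi cot(pi x) at x = 1/6 and x = 1/3. In the first one
  the partial sums are a combination of the harmonic numbers H(6N), H(3N), H(2N), H(N) in which the
  logarithmic growth cancels, leaving (3/8) ln 3.

  The power sums over the even residues mod 6 are rescaled sums mod 3. In the first identity they
  recombine into zeta values. In the second they give L(s) = sum_k 1/(3k+1)^s - 1/(3k+2)^s at odd s,
  which is computed by comparing two generating functions. The Taylor coefficients of
  psi(2/3 - t/3) - psi(1/3 - t/3) + psi(2/3 + t/3) - psi(1/3 + t/3) are multiples of the L(2j+1),
  and by the reflection formula this function times 1 + 2 cos(2 pi t/3) is constant. On the other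
  hand B(x) = x e^(x/3)/(e^x - 1) generates the B_n(1/3)/n! and satisfies
  (B(x) - B(-x)) (1 + e^(x/3) + e^(-x/3)) = -x; at x = 2 pi i t the second factor becomes
  1 + 2 cos(2 pi t/3), and comparing coefficients expresses L(2j+1) through B_(2j+1)(1/3).
*)

theory Submission
  imports Defs "HOL-Complex_Analysis.Complex_Analysis" "HOL-Real_Asymp.Real_Asymp"
begin

section \<open>Sums over arithmetic progressions\<close>

definition progression_sum :: "real \<Rightarrow> real \<Rightarrow> nat \<Rightarrow> real" where
  "progression_sum m r s = (\<Sum>k. 1 / (m * real k + r) ^ s)"

lemma summable_progression:
  assumes "m > 0" "r > 0" "s \<ge> 2"
  shows "summable (\<lambda>k. 1 / (m * real k + r) ^ s)"
proof -
  have "summable (\<lambda>k. inverse ((r / m + of_nat k) ^ s) / m ^ s :: real)"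
    using Polygamma_converges'[of "r / m" s] assms by (intro summable_divide) simp
  also have "(\<lambda>k. inverse ((r / m + of_nat k) ^ s) / m ^ s) = (\<lambda>k. 1 / (m * real k + r) ^ s)"
  proof
    fix k
    have "(r / m + real k) * m = m * real k + r"
      using assms by (simp add: field_simps)
    then show "inverse ((r / m + of_nat k) ^ s) / m ^ s = 1 / (m * real k + r) ^ s"
      by (metis divide_divide_eq_left inverse_eq_divide power_mult_distrib)
  qed
  finally show ?thesis .
qed

lemma progression_sums:
  "m > 0 \<Longrightarrow> r > 0 \<Longrightarrow> s \<ge> 2 \<Longrightarrow> (\<lambda>k. 1 / (m * real k + r) ^ s) sums progression_sum m r s"
  unfolding progression_sum_def by (intro summable_sums summable_progression)

lemma progression_sum_scale:
  assumes "c > 0" "m > 0" "r > 0" "s \<ge> 2"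
  shows "progression_sum (c * m) (c * r) s = progression_sum m r s / c ^ s"
proof -
  have "(\<lambda>k. 1 / (c * m * real k + c * r) ^ s) = (\<lambda>k. 1 / (m * real k + r) ^ s / c ^ s)"
    by (simp add: fun_eq_iff algebra_simps flip: power_mult_distrib)
  then show ?thesis
    unfolding progression_sum_def by (simp only: suminf_divide summable_progression assms)
qed

lemma progression_sum_shift:
  assumes "m > 0" "r > 0" "s \<ge> 2"
  shows "progression_sum m (r + m) s = progression_sum m r s - 1 / r ^ s"
proof -
  have "(\<lambda>k. 1 / (m * real (Suc k) + r) ^ s) = (\<lambda>k. 1 / (m * real k + (r + m)) ^ s)"
    by (simp add: algebra_simps)
  then show ?thesis
    using suminf_split_head[OF summable_progression[OF assms]]
    unfolding progression_sum_def by simp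
qed

lemma Polygamma_eq_progression_sum:
  assumes "0 < r" "0 < m" "0 < n"
  shows "Polygamma n (r / m) = (-1) ^ Suc n * fact n * m ^ Suc n * progression_sum m r (Suc n)"
proof -
  have "(\<lambda>k. 1 / (1 * real k + r / m) ^ Suc n) sums ((-1) ^ Suc n * Polygamma n (r / m) / fact n)"
    using Polygamma_LIMSEQ[of "r / m" n] assms by (simp add: add.commute divide_inverse)
  then have "progression_sum 1 (r / m) (Suc n) = (-1) ^ Suc n * Polygamma n (r / m) / fact n"
    unfolding progression_sum_def by (rule sums_unique[symmetric])
  moreover have "(-1) ^ Suc n * (-1) ^ Suc n = (1::real)"
    by (simp flip: power_add)
  ultimately have "Polygamma n (r / m) = (-1) ^ Suc n * fact n * progression_sum 1 (r / m) (Suc n)"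
    by (simp add: mult.assoc[symmetric])
  moreover have "progression_sum m r (Suc n) = progression_sum 1 (r / m) (Suc n) / m ^ Suc n"
    using progression_sum_scale[of m 1 "r / m" "Suc n"] assms by simp
  ultimately show ?thesis
    using assms by simp
qed

lemma riemann_zeta_eq_progression_sum: "riemann_zeta s = progression_sum 1 1 s"
  by (simp add: riemann_zeta_def progression_sum_def add.commute)

lemma riemann_zeta_split_residues:
  assumes "m > 0" "s \<ge> 2"
  shows "riemann_zeta s = (\<Sum>i=1..m. progression_sum (real m) (real i) s)"
proof -
  have "(\<lambda>k. 1 / (1 * real k + 1) ^ s) sums riemann_zeta s"
    unfolding riemann_zeta_eq_progression_sum using assms by (intro progression_sums) auto
  from sums_group[OF this, of m] assms
  have "(\<lambda>n. \<Sum>k\<in>{n * m..<n * m + m}. 1 / (1 * real k + 1) ^ s) sums riemann_zeta s"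
    by simp
  moreover have "(\<Sum>k\<in>{n * m..<n * m + m}. 1 / (1 * real k + 1) ^ s) =
      (\<Sum>i=1..m. 1 / (real m * real n + real i) ^ s)" for n
  proof -
    have "(\<Sum>k\<in>{n * m..<n * m + m}. 1 / (1 * real k + 1) ^ s) =
        (\<Sum>i<m. 1 / (1 * real (i + n * m) + 1) ^ s)"
      using sum.shift_bounds_nat_ivl[of "\<lambda>k. 1 / (1 * real k + 1) ^ s" 0 "n * m" m]
      by (simp add: atLeast0LessThan add.commute)
    also have "\<dots> = (\<Sum>i=1..m. 1 / (real m * real n + real i) ^ s)"
      by (simp add: sum.atLeast1_atMost_eq algebra_simps)
    finally show ?thesis .
  qed
  ultimately have "(\<lambda>n. \<Sum>i=1..m. 1 / (real m * real n + real i) ^ s) sums riemann_zeta s"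
    by simp
  moreover have "(\<lambda>n. \<Sum>i=1..m. 1 / (real m * real n + real i) ^ s) sums
      (\<Sum>i=1..m. progression_sum (real m) (real i) s)"
    using assms by (intro sums_sum progression_sums) auto
  ultimately show ?thesis by (rule sums_unique2)
qed

lemma progression_sum_6_6_8_10:
  assumes "s \<ge> 2"
  shows "progression_sum 6 6 s - (progression_sum 6 8 s + progression_sum 6 10 s) / 2 =
    (1 + 1 / 2 ^ s) / 2 ^ (s + 1) - (1 - 3 / 3 ^ s) * riemann_zeta s / 2 ^ (s + 1)"
proof -
  have split: "riemann_zeta s = progression_sum 3 1 s + progression_sum 3 2 s + progression_sum 3 3 s"
    using riemann_zeta_split_residues[of 3 s] assms by (simp add: eval_nat_numeral)
  have P33: "progression_sum 3 3 s = riemann_zeta s / 3 ^ s"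
    using progression_sum_scale[of 3 1 1 s] assms by (simp add: riemann_zeta_eq_progression_sum)
  have scale2: "progression_sum 6 (2 * r) s = progression_sum 3 r s / 2 ^ s" if "r > 0" for r :: real
    using progression_sum_scale[of 2 3 r s] assms that by simp
  have "progression_sum 3 (1 + 3) s = progression_sum 3 1 s - 1"
      "progression_sum 3 (2 + 3) s = progression_sum 3 2 s - 1 / 2 ^ s"
    using progression_sum_shift[of 3 1 s] progression_sum_shift[of 3 2 s] assms by simp_all
  moreover have "progression_sum 3 2 s = riemann_zeta s - riemann_zeta s / 3 ^ s - progression_sum 3 1 s"
    using split P33 by linarith
  ultimately have "progression_sum 6 6 s = riemann_zeta s / 3 ^ s / 2 ^ s"
      "progression_sum 6 8 s = (progression_sum 3 1 s - 1) / 2 ^ s"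
      "progression_sum 6 10 s =
        (riemann_zeta s - riemann_zeta s / 3 ^ s - progression_sum 3 1 s - 1 / 2 ^ s) / 2 ^ s"
    using scale2[of 3] scale2[of 4] scale2[of 5] P33 by simp_all
  then show ?thesis
    by (simp only:) (simp add: field_simps)
qed

section \<open>Partial fractions\<close>

lemma inverse_consecutive_product:
  fixes n :: "'a::field_char_0"
  assumes "n - 1 \<noteq> 0" "n \<noteq> 0" "n + 1 \<noteq> 0"
  shows "1 / ((n - 1) * n * (n + 1)) = (1 / (n - 1) + 1 / (n + 1)) / 2 - 1 / n"
  using assms by (simp add: divide_simps) (simp add: algebra_simps)

lemma inverse_centered_odd_power:
  fixes n :: "'a::field"
  assumes "n - 1 \<noteq> 0" "n \<noteq> 0" "n + 1 \<noteq> 0"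
  shows "1 / ((n - 1) * n ^ (2*p+1) * (n + 1)) =
    1 / ((n - 1) * n * (n + 1)) - (\<Sum>j=1..p. 1 / n ^ (2*j+1))"
proof (induction p)
  case (Suc p)
  \<comment> \<open>\<open>1 = n\<^sup>2 - (n - 1) (n + 1)\<close>\<close>
  have "1 / ((n - 1) * n ^ (2 * Suc p + 1) * (n + 1)) =
      1 / ((n - 1) * n ^ (2*p+1) * (n + 1)) - 1 / n ^ (2 * Suc p + 1)"
    using assms by (simp add: divide_simps) (simp add: algebra_simps)
  with Suc show ?case
    by simp
qed simp

definition centered_sum :: "real \<Rightarrow> real \<Rightarrow> nat \<Rightarrow> real" where
  "centered_sum m r p =
    (\<Sum>k. 1 / ((m * real k + r - 1) * (m * real k + r) ^ (2*p+1) * (m * real k + r + 1)))"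

lemma centered_sum_0:
  "centered_sum m r 0 = (\<Sum>k. 1 / ((m * real k + r - 1) * (m * real k + r) * (m * real k + r + 1)))"
  by (simp add: centered_sum_def)

lemma summable_centered_cubic:
  assumes "m > 0" "r > 1"
  shows "summable (\<lambda>k. 1 / ((m * real k + r - 1) * (m * real k + r) * (m * real k + r + 1)))"
proof (rule summable_comparison_test'[OF summable_progression[of m "r - 1" 3]])
  fix k
  define x where "x = m * real k + r"
  have "m * real k \<ge> 0"
    using assms by simp
  then have "x > 1"
    unfolding x_def using assms by linarith
  then have "(x - 1) ^ 3 \<le> (x - 1) * x * (x + 1)"
    by (simp add: power3_eq_cube mult_mono)
  with \<open>x > 1\<close> have "1 / ((x - 1) * x * (x + 1)) \<le> 1 / (x - 1) ^ 3"
    by (intro divide_left_mono) auto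
  moreover have e: "m * real k + r - 1 = x - 1" "m * real k + r + 1 = x + 1"
      "m * real k + (r - 1) = x - 1"
    by (simp_all add: x_def)
  ultimately show "norm (1 / ((m * real k + r - 1) * (m * real k + r) * (m * real k + r + 1)))
      \<le> 1 / (m * real k + (r - 1)) ^ 3"
    unfolding e x_def[symmetric] using \<open>x > 1\<close> by simp
qed (use assms in auto)

lemma centered_sum_eq:
  assumes "m > 0" "r > 1"
  shows "centered_sum m r p = centered_sum m r 0 - (\<Sum>j=1..p. progression_sum m r (2*j+1))"
proof -
  have "(\<lambda>k. 1 / ((m * real k + r - 1) * (m * real k + r) * (m * real k + r + 1))
      - (\<Sum>j=1..p. 1 / (m * real k + r) ^ (2*j+1)))
    sums (centered_sum m r 0 - (\<Sum>j=1..p. progression_sum m r (2*j+1)))"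
    unfolding centered_sum_0 using assms
    by (intro sums_diff sums_sum summable_sums summable_centered_cubic progression_sums) auto
  moreover have "1 / ((m * real k + r - 1) * (m * real k + r) ^ (2*p+1) * (m * real k + r + 1)) =
      1 / ((m * real k + r - 1) * (m * real k + r) * (m * real k + r + 1))
      - (\<Sum>j=1..p. 1 / (m * real k + r) ^ (2*j+1))" for k
  proof -
    have "m * real k \<ge> 0"
      using assms by simp
    then show ?thesis
      by (intro inverse_centered_odd_power) (use assms in linarith)+
  qed
  ultimately show ?thesis
    unfolding centered_sum_def[of m r p] by (simp add: sums_iff)
qed

lemma centered_sum_0_sums:
  assumes "m > 0" "r > 1"
  shows "(\<lambda>k. (1 / (m * real k + (r - 1)) + 1 / (m * real k + (r + 1))) / 2 - 1 / (m * real k + r))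
    sums centered_sum m r 0"
proof -
  have "1 / ((m * real k + r - 1) * (m * real k + r) * (m * real k + r + 1)) =
      (1 / (m * real k + (r - 1)) + 1 / (m * real k + (r + 1))) / 2 - 1 / (m * real k + r)" for k
  proof -
    have "m * real k \<ge> 0"
      using assms by simp
    then show ?thesis
      by (subst inverse_consecutive_product) (use assms in \<open>linarith | simp add: algebra_simps\<close>)+
  qed
  then show ?thesis
    unfolding centered_sum_0 using summable_centered_cubic[OF assms] by (simp add: summable_sums)
qed

section \<open>The reflection formula for the digamma function\<close>

lemma sin_pi_times_nonzero:
  fixes z :: complex
  assumes "z \<notin> \<int>"
  shows "sin (pi * z) \<noteq> 0"
proof
  assume "sin (pi * z) = 0"
  then obtain n :: int where "pi * z = of_real (of_int n * pi)"
    by (auto simp: sin_eq_0)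
  then have "z = of_int n"
    by (simp add: field_simps)
  with assms show False
    by simp
qed

lemma Digamma_reflection:
  fixes z :: complex
  assumes "z \<notin> \<int>"
  shows "Digamma (1 - z) - Digamma z = pi * cot (pi * z)"
proof -
  have z: "z \<notin> \<int>\<^sub>\<le>\<^sub>0" and z': "1 - z \<notin> \<int>\<^sub>\<le>\<^sub>0"
    using assms nonpos_Ints_subset_Ints Ints_diff[of 1 "1 - z"] by auto
  have reflection: "(\<lambda>w::complex. Gamma w * Gamma (1 - w)) = (\<lambda>w::complex. pi / sin (pi * w))"
    using Gamma_reflection_complex by auto
  have sin_nz: "sin (pi * z) \<noteq> 0"
    using sin_pi_times_nonzero[OF assms] .
  \<comment> \<open>differentiate both sides of the reflection formula at \<open>z\<close>\<close>
  have "((\<lambda>w. Gamma (1 - w)) has_field_derivative Gamma (1 - z) * Digamma (1 - z) * (-1)) (at z)"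
    by (rule DERIV_chain2[where g = "\<lambda>w. 1 - w", OF has_field_derivative_Gamma[OF z']])
      (auto intro!: derivative_eq_intros)
  then have "((\<lambda>w. Gamma w * Gamma (1 - w)) has_field_derivative
      Gamma z * Gamma (1 - z) * (Digamma z - Digamma (1 - z))) (at z)"
    using z z' by (auto intro!: derivative_eq_intros has_field_derivative_Gamma[OF z] simp: algebra_simps)
  moreover have "((\<lambda>w. pi / sin (pi * w)) has_field_derivative
      - (pi * (cos (pi * z) * pi)) / (sin (pi * z))\<^sup>2) (at z)"
    using sin_nz by (auto intro!: derivative_eq_intros simp: power2_eq_square)
  ultimately have "Gamma z * Gamma (1 - z) * (Digamma z - Digamma (1 - z)) =
      - (pi * (cos (pi * z) * pi)) / (sin (pi * z))\<^sup>2"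
    unfolding reflection using DERIV_unique by blast
  moreover have "Gamma z * Gamma (1 - z) = pi / sin (pi * z)"
    by (rule Gamma_reflection_complex)
  ultimately have "pi / sin (pi * z) * (Digamma z - Digamma (1 - z)) =
      pi / sin (pi * z) * (- (pi * cot (pi * z)))"
    by (simp add: cot_def power2_eq_square)
  moreover have "pi / sin (pi * z) \<noteq> 0"
    using sin_nz by simp
  ultimately have "Digamma z - Digamma (1 - z) = - (pi * cot (pi * z))"
    using mult_left_cancel by blast
  then show ?thesis
    by (simp add: algebra_simps)
qed

lemma Digamma_reflection_real:
  fixes x :: real
  assumes "x \<notin> \<int>"
  shows "Digamma (1 - x) - Digamma x = pi * cot (pi * x)"
proof -
  have "x \<noteq> 0" "1 - x \<noteq> 0"
    using assms by auto
  then have "complex_of_real (Digamma (1 - x) - Digamma x) =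
      Digamma (1 - complex_of_real x) - Digamma (complex_of_real x)"
    using Polygamma_of_real[where 'a = complex, of "1 - x" 0] Polygamma_of_real[where 'a = complex, of x 0]
    by simp
  also have "\<dots> = of_real (pi * cot (pi * x))"
    using Digamma_reflection[of x] assms by (metis cot_of_real of_real_in_Ints_iff of_real_mult)
  finally show ?thesis
    using of_real_eq_iff by blast
qed

lemma sums_inverse_diff_Digamma:
  fixes x y :: "'a::{real_normed_field,banach}"
  assumes "x \<noteq> 0" "y \<noteq> 0"
  shows "(\<lambda>k. inverse (x + of_nat k) - inverse (y + of_nat k)) sums (Digamma y - Digamma x)"
proof -
  have "(\<lambda>k. inverse (of_nat (Suc k)) - inverse (z + of_nat k)) sums (Digamma z + euler_mascheroni)"
    if "z \<noteq> 0" for z :: 'a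
    using summable_Digamma[OF that] by (simp add: Digamma_def summable_sums)
  from sums_diff[OF this[OF assms(2)] this[OF assms(1)]] show ?thesis
    by simp
qed

lemma sums_progression_reflection:
  assumes "0 < r" "r < m"
  shows "(\<lambda>k. 1 / (m * real k + r) - 1 / (m * real k + (m - r))) sums (pi / m * cot (pi * r / m))"
proof -
  have "r / m \<notin> \<int>"
  proof
    assume "r / m \<in> \<int>"
    then obtain z where "r / m = of_int z"
      by (elim Ints_cases)
    moreover have "0 < r / m" "r / m < 1"
      using assms by auto
    ultimately show False
      by simp
  qed
  then have "Digamma (1 - r / m) - Digamma (r / m) = pi * cot (pi * r / m)"
    using Digamma_reflection_real by simp
  moreover have "(\<lambda>k. (inverse (r / m + real k) - inverse (1 - r / m + real k)) / m) sums
      ((Digamma (1 - r / m) - Digamma (r / m)) / m)"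
    using assms by (intro sums_divide sums_inverse_diff_Digamma) auto
  moreover have "(inverse (r / m + real k) - inverse (1 - r / m + real k)) / m =
      1 / (m * real k + r) - 1 / (m * real k + (m - r))" for k
  proof -
    have "r / m + real k = (m * real k + r) / m" "1 - r / m + real k = (m * real k + (m - r)) / m"
      using assms by (simp_all add: field_simps)
    then show ?thesis
      using assms by (simp add: diff_divide_distrib)
  qed
  ultimately show ?thesis
    by simp
qed

lemma centered_sum_0_2_minus_4: "centered_sum 6 2 0 - centered_sum 6 4 0 = sqrt 3 * pi / 36"
proof -
  have "(\<lambda>k. (1 / (6 * real k + 1) - 1 / (6 * real k + (6 - 1))) / 2
      - (1 / (6 * real k + 2) - 1 / (6 * real k + (6 - 2))))
    sums ((pi / 6 * cot (pi * 1 / 6)) / 2 - pi / 6 * cot (pi * 2 / 6))" (is "?f sums _")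
    using sums_progression_reflection[of 1 6] sums_progression_reflection[of 2 6]
    by (intro sums_diff sums_divide) simp_all
  moreover have "?f sums (centered_sum 6 2 0 - centered_sum 6 4 0)"
  proof -
    have "(\<lambda>k. ((1 / (6 * real k + (2 - 1)) + 1 / (6 * real k + (2 + 1))) / 2 - 1 / (6 * real k + 2))
        - ((1 / (6 * real k + (4 - 1)) + 1 / (6 * real k + (4 + 1))) / 2 - 1 / (6 * real k + 4)))
      sums (centered_sum 6 2 0 - centered_sum 6 4 0)" (is "?g sums _")
      by (intro sums_diff centered_sum_0_sums) simp_all
    also have "?g = ?f"
      by (simp add: fun_eq_iff diff_divide_distrib add_divide_distrib algebra_simps)
    finally show ?thesis .
  qed
  ultimately have "centered_sum 6 2 0 - centered_sum 6 4 0 =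
      (pi / 6 * cot (pi * 1 / 6)) / 2 - pi / 6 * cot (pi * 2 / 6)"
    by (simp add: sums_iff)
  also have "\<dots> = sqrt 3 * pi / 36"
    by (simp add: cot_def sin_30 cos_30 sin_60 cos_60 field_simps)
  finally show ?thesis .
qed

section \<open>Harmonic numbers and the logarithm of 3\<close>

lemma harm_add: "harm (n + m) = harm n + (\<Sum>i=1..m. inverse (of_nat (n + i)))"
  by (induction m) (simp_all add: harm_Suc)

lemma tendsto_harm_mult_minus_ln:
  assumes "c > 0"
  shows "(\<lambda>N. harm (c * N) - ln (real (c * N)) :: real) \<longlonglongrightarrow> euler_mascheroni"
proof -
  have "strict_mono (\<lambda>N. c * N)"
    using assms by (auto simp: strict_mono_def)
  from LIMSEQ_subseq_LIMSEQ[OF euler_mascheroni_LIMSEQ this] show ?thesis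
    by (simp add: o_def)
qed

lemma sum_ln3_weights_eq_harm:
  "(\<Sum>k<N. (1 / (6 * real k + 1) + 1 / (6 * real k + 5)) / 4
      + (1 / (6 * real k + 2) - 1 / (6 * real k + 3) + 1 / (6 * real k + 4)) / 2
      - 1 / (6 * real k + 6)) =
    harm (6 * N) / 4 + harm (3 * N) / 8 - harm (2 * N) / 4 - harm N / 8"
proof (induction N)
  case (Suc N)
  define a where "a r = 1 / (6 * real N + r)" for r :: real
  have "inverse (real (6 * N + i)) = a i" for i
    by (simp add: a_def inverse_eq_divide)
  moreover have "inverse (real (3 * N + i)) = 2 * a (2 * i)" if "i > 0" for i
    using that by (simp add: a_def field_simps)
  moreover have "inverse (real (2 * N + i)) = 3 * a (3 * i)" if "i > 0" for i
    using that by (simp add: a_def field_simps)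
  moreover have "inverse (real (N + 1)) = 6 * a 6"
    by (simp add: a_def field_simps)
  moreover have "c * Suc N = c * N + c" for c :: nat
    by simp
  ultimately have harm_step: "harm (6 * Suc N) = harm (6 * N) + a 1 + a 2 + a 3 + a 4 + a 5 + a 6"
      "harm (3 * Suc N) = harm (3 * N) + 2 * a 2 + 2 * a 4 + 2 * a 6"
      "harm (2 * Suc N) = harm (2 * N) + 3 * a 3 + 3 * a 6"
      "harm (Suc N) = harm N + 6 * a 6"
    by (simp_all only: harm_add) (simp_all add: eval_nat_numeral add_ac harm_Suc)
  have summand: "(1 / (6 * real N + 1) + 1 / (6 * real N + 5)) / 4
      + (1 / (6 * real N + 2) - 1 / (6 * real N + 3) + 1 / (6 * real N + 4)) / 2
      - 1 / (6 * real N + 6) = (a 1 + a 5) / 4 + (a 2 - a 3 + a 4) / 2 - a 6"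
    by (simp add: a_def)
  then show ?case
    unfolding sum.lessThan_Suc Suc.IH harm_step summand by (simp add: field_simps)
qed simp

lemma sums_ln3_weights:
  "(\<lambda>k. (1 / (6 * real k + 1) + 1 / (6 * real k + 5)) / 4
      + (1 / (6 * real k + 2) - 1 / (6 * real k + 3) + 1 / (6 * real k + 4)) / 2
      - 1 / (6 * real k + 6)) sums (3/8 * ln 3)"
proof -
  define g :: "nat \<Rightarrow> nat \<Rightarrow> real" where "g c N = harm (c * N) - ln (real (c * N))" for c N
  have "(\<Sum>k<N. (1 / (6 * real k + 1) + 1 / (6 * real k + 5)) / 4
      + (1 / (6 * real k + 2) - 1 / (6 * real k + 3) + 1 / (6 * real k + 4)) / 2
      - 1 / (6 * real k + 6)) = g 6 N / 4 + g 3 N / 8 - g 2 N / 4 - g 1 N / 8 + 3/8 * ln 3"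
    if "N > 0" for N
  proof -
    have "ln (6 * real N) = ln 2 + ln 3 + ln (real N)" "ln (3 * real N) = ln 3 + ln (real N)"
      "ln (2 * real N) = ln 2 + ln (real N)"
      using \<open>N > 0\<close> ln_mult[of 2 3] by (simp_all add: ln_mult)
    then show ?thesis
      unfolding sum_ln3_weights_eq_harm g_def by (simp add: field_simps)
  qed
  then have "\<forall>\<^sub>F N in sequentially. g 6 N / 4 + g 3 N / 8 - g 2 N / 4 - g 1 N / 8 + 3/8 * ln 3 =
      (\<Sum>k<N. (1 / (6 * real k + 1) + 1 / (6 * real k + 5)) / 4
        + (1 / (6 * real k + 2) - 1 / (6 * real k + 3) + 1 / (6 * real k + 4)) / 2
        - 1 / (6 * real k + 6))"
    by (intro eventually_mono[OF eventually_gt_at_top[of 0]]) simp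
  moreover have "(\<lambda>N. g 6 N / 4 + g 3 N / 8 - g 2 N / 4 - g 1 N / 8 + 3/8 * ln 3) \<longlonglongrightarrow>
      euler_mascheroni / 4 + euler_mascheroni / 8 - euler_mascheroni / 4 - euler_mascheroni / 8
      + 3/8 * ln 3"
    unfolding g_def by (intro tendsto_intros tendsto_harm_mult_minus_ln) simp_all
  ultimately show ?thesis
    unfolding sums_def by (auto dest: Lim_transform_eventually)
qed

lemma centered_sum_0_6_8_10:
  "centered_sum 6 6 0 - (centered_sum 6 8 0 + centered_sum 6 10 0) / 2 = 3/8 * ln 3 - 49/120"
proof -
  \<comment> \<open>the summands differ from those of \<open>sums_ln3_weights\<close> by a telescoping term\<close>
  define e where "e k = (1 / (6 * real k + 1) - 1 / (6 * real k + 5)) / 4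
      + (1 / (6 * real k + 2) - 1 / (6 * real k + 3) + 1 / (6 * real k + 4)) / 2" for k
  have "e \<longlonglongrightarrow> 0"
    unfolding e_def by real_asymp
  with sums_ln3_weights have "(\<lambda>k. ((1 / (6 * real k + 1) + 1 / (6 * real k + 5)) / 4
      + (1 / (6 * real k + 2) - 1 / (6 * real k + 3) + 1 / (6 * real k + 4)) / 2
      - 1 / (6 * real k + 6)) + (e (Suc k) - e k)) sums (3/8 * ln 3 + (0 - e 0))"
    (is "?f sums _") by (intro sums_add telescope_sums)
  moreover have "(\<lambda>k. ((1 / (6 * real k + (6 - 1)) + 1 / (6 * real k + (6 + 1))) / 2 - 1 / (6 * real k + 6))
      - (((1 / (6 * real k + (8 - 1)) + 1 / (6 * real k + (8 + 1))) / 2 - 1 / (6 * real k + 8))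
        + ((1 / (6 * real k + (10 - 1)) + 1 / (6 * real k + (10 + 1))) / 2 - 1 / (6 * real k + 10))) / 2)
    sums (centered_sum 6 6 0 - (centered_sum 6 8 0 + centered_sum 6 10 0) / 2)" (is "?g sums _")
    by (intro sums_diff sums_divide sums_add centered_sum_0_sums) simp_all
  moreover have "?f = ?g"
  proof
    fix k
    define a where "a r = 1 / (6 * real k + r)" for r :: real
    have "e (Suc k) = (a 7 - a 11) / 4 + (a 8 - a 9 + a 10) / 2"
      by (simp add: e_def a_def algebra_simps)
    moreover have "e k = (a 1 - a 5) / 4 + (a 2 - a 3 + a 4) / 2"
      by (simp add: e_def a_def)
    ultimately show "?f k = ?g k"
      by (simp add: a_def[symmetric]) (simp add: field_simps)
  qed
  ultimately show ?thesis
    by (simp add: sums_iff e_def)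
qed

section \<open>The generating function of the Bernoulli polynomials at 1/3\<close>

definition fps_of_real :: "real fps \<Rightarrow> 'a::real_algebra_1 fps" where
  "fps_of_real f = Abs_fps (\<lambda>n. of_real (fps_nth f n))"

lemma fps_nth_fps_of_real [simp]: "fps_nth (fps_of_real f) n = of_real (fps_nth f n)"
  by (simp add: fps_of_real_def)

lemma fps_of_real_add: "fps_of_real (f + g) = fps_of_real f + fps_of_real g"
  by (rule fps_ext) simp

lemma fps_of_real_uminus: "fps_of_real (- f) = - fps_of_real f"
  by (rule fps_ext) simp

lemma fps_of_real_mult: "fps_of_real (f * g) = fps_of_real f * fps_of_real g"
  by (rule fps_ext) (simp add: fps_mult_nth)

lemma fps_of_real_1: "fps_of_real 1 = 1"
  by (rule fps_ext) simp

lemma fps_of_real_fps_X: "fps_of_real fps_X = fps_X"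
  by (rule fps_ext) (simp add: fps_X_def)

lemma fps_of_real_fps_exp: "fps_of_real (fps_exp a) = (fps_exp (of_real a) :: 'a::real_field fps)"
  by (rule fps_ext) (simp add: fps_exp_def)

definition bernpoly_fps :: "'a::field_char_0 \<Rightarrow> 'a fps" where
  "bernpoly_fps y = fps_X * fps_exp y / (fps_exp 1 - 1)"

lemma bernpoly_eq_fps_nth: "bernpoly n y = fact n * fps_nth (bernpoly_fps y) n"
  by (simp add: bernpoly_def bernpoly_fps_def)

lemma bernpoly_fps_mult: "bernpoly_fps y * (fps_exp 1 - 1) = fps_X * fps_exp y"
proof -
  have "fps_nth (fps_exp 1 - 1 :: 'a fps) 1 = 1"
    by simp
  then have "fps_exp 1 - 1 \<noteq> (0 :: 'a fps)" "subdegree (fps_exp 1 - 1 :: 'a fps) \<le> 1"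
    by (metis fps_zero_nth zero_neq_one) (simp add: subdegree_leI)
  moreover have "subdegree (fps_X * fps_exp y :: 'a fps) = 1"
    by (subst subdegree_mult) (auto simp: subdegree_eq_0_iff)
  ultimately show ?thesis
    unfolding bernpoly_fps_def by (intro fps_times_divide_eq) simp_all
qed

lemma bernpoly_fps_third_odd_part:
  defines "B \<equiv> bernpoly_fps (1/3) :: 'a::field_char_0 fps"
  shows "(B - (B oo - fps_X)) * (1 + fps_exp (1/3) + fps_exp (- 1/3)) = - fps_X"
proof -
  define u v where "u = (fps_exp (1/3) :: 'a fps)" and "v = (fps_exp (- 1/3) :: 'a fps)"
  have uv: "u * v = 1" "u ^ 3 = fps_exp 1" "v ^ 3 = fps_exp (- 1)"
    by (simp_all add: u_def v_def fps_exp_power_mult flip: fps_exp_add_mult)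
  have "u \<noteq> 1"
  proof
    assume "u = 1"
    then have "fps_nth u 1 = fps_nth 1 1"
      by simp
    then show False
      by (simp add: u_def)
  qed
  have "B * (u ^ 3 - 1) = fps_X * u"
    unfolding uv(2) unfolding B_def u_def by (rule bernpoly_fps_mult)
  moreover have "(B oo - fps_X) * (v ^ 3 - 1) = - fps_X * v"
  proof -
    have "(B * (fps_exp 1 - 1)) oo - fps_X = (fps_X * u) oo - fps_X"
      unfolding B_def u_def bernpoly_fps_mult ..
    then show ?thesis
      by (simp add: fps_compose_mult_distrib fps_compose_sub_distrib u_def v_def fps_exp_power_mult)
  qed
  \<comment> \<open>\<open>u\<^sup>3 - 1 = (u - 1) (1 + u + u\<^sup>2)\<close> and \<open>v = 1/u\<close>\<close>
  ultimately have "u * (u - 1) * ((B - (B oo - fps_X)) * (1 + u + v) + fps_X) = 0"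
    using uv(1) by algebra
  with \<open>u \<noteq> 1\<close> uv(1) have "(B - (B oo - fps_X)) * (1 + u + v) + fps_X = 0"
    by auto
  then show ?thesis
    unfolding u_def v_def by (simp add: eq_neg_iff_add_eq_0)
qed

lemma bernpoly_fps_odd_part_scaled:
  defines "B \<equiv> bernpoly_fps (1/3) :: real fps" and "c \<equiv> 2 * pi * \<i>"
  shows "(fps_of_real (B - (B oo - fps_X)) oo (fps_const c * fps_X)) *
      (1 + fps_const 2 * fps_cos (of_real (2 * pi / 3))) = - (fps_const c * fps_X)"
proof -
  have "fps_of_real ((B - (B oo - fps_X)) * (1 + fps_exp (1/3) + fps_exp (- 1/3))) =
      (fps_of_real (- fps_X) :: complex fps)"
    unfolding B_def bernpoly_fps_third_odd_part ..
  then have "fps_of_real (B - (B oo - fps_X)) * (1 + fps_exp (1/3) + fps_exp (- 1/3)) =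
      (- fps_X :: complex fps)"
    by (simp add: fps_of_real_mult fps_of_real_add fps_of_real_1 fps_of_real_fps_exp
        fps_of_real_uminus fps_of_real_fps_X)
  then have "(fps_of_real (B - (B oo - fps_X)) * (1 + fps_exp (1/3) + fps_exp (- 1/3)))
      oo (fps_const c * fps_X) = - fps_X oo (fps_const c * fps_X)"
    by (rule arg_cong)
  then have "(fps_of_real (B - (B oo - fps_X)) oo (fps_const c * fps_X)) *
      (1 + fps_exp (c / 3) + fps_exp (- c / 3)) = - (fps_const c * fps_X)"
    by (simp add: fps_compose_mult_distrib fps_compose_add_distrib fps_compose_uminus)
  moreover have "1 + fps_const 2 * fps_cos (of_real (2 * pi / 3)) = 1 + fps_exp (c / 3) + fps_exp (- c / 3)"
  proof -
    have i_c: "\<i> * of_real (2 * pi / 3) = c / 3" "- \<i> * of_real (2 * pi / 3) = - c / 3"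
      by (simp_all add: c_def)
    show ?thesis
      unfolding fps_cos_fps_exp_ii i_c divide_fps_const mult.assoc[symmetric] fps_const_mult
      by simp
  qed
  ultimately show ?thesis
    by (simp only:)
qed

section \<open>A generating function of digamma values\<close>

lemma cot_add_mult_sin:
  fixes A B :: "'a::{real_normed_field,banach}"
  assumes "sin A \<noteq> 0" "sin B \<noteq> 0"
  shows "(cot A + cot B) * (sin A * sin B) = sin (A + B)"
  using assms by (simp add: cot_def sin_add field_simps)

lemma one_plus_two_cos_diff:
  fixes A B :: "'a::{real_normed_field,banach}"
  assumes "cos (A + B) = - 1/2"
  shows "1 + 2 * cos (A - B) = 4 * (sin A * sin B)"
  using assms by (simp add: cos_add cos_diff field_simps)

lemma not_Ints_if_Re_between:
  fixes z :: complex
  assumes "0 < Re z" "Re z < 1"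
  shows "z \<notin> \<int>"
  using assms by (auto elim!: Ints_cases)

lemma Re_affine_pos:
  fixes u a t :: complex
  assumes "norm u \<le> Re a" "0 < Re a" "norm t < 1"
  shows "0 < Re (u * t + a)"
proof -
  have "norm u * norm t < Re a"
  proof (cases "u = 0")
    case False
    then have "norm u * norm t < norm u"
      using assms(3) by simp
    with assms(1) show ?thesis
      by linarith
  qed (use assms in simp)
  moreover have "- Re (u * t) \<le> norm (u * t)"
    using abs_Re_le_cmod[of "u * t"] by linarith
  ultimately show ?thesis
    by (simp add: norm_mult)
qed

lemma has_fps_expansion_Digamma_affine:
  fixes u a :: complex
  assumes "norm u \<le> Re a" "0 < Re a"
  shows "(\<lambda>t. Digamma (u * t + a)) has_fps_expansion Abs_fps (\<lambda>n. u ^ n * Polygamma n a / fact n)"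
proof -
  define H where "H = {w. 0 < Re w}"
  have "open H"
    by (simp add: H_def open_halfspace_Re_gt)
  have Digamma_hol: "Digamma holomorphic_on H"
    by (intro holomorphic_on_Polygamma) (auto simp: H_def elim!: nonpos_Ints_cases)
  have image: "u * t + a \<in> H" if "t \<in> ball 0 1" for t
    using Re_affine_pos[OF assms, of t] that by (simp add: H_def)
  then have "Digamma holomorphic_on (\<lambda>t. u * t + a) ` ball 0 1"
    by (intro holomorphic_on_subset[OF Digamma_hol]) blast
  then have "(Digamma \<circ> (\<lambda>t. u * t + a)) holomorphic_on ball 0 1"
    by (rule holomorphic_on_compose[rotated]) (intro holomorphic_intros)
  then have "(\<lambda>t. Digamma (u * t + a)) holomorphic_on ball 0 1"
    by (simp add: o_def)
  then have "(\<lambda>t. Digamma (u * t + a)) has_fps_expansion fps_expansion (\<lambda>t. Digamma (u * t + a)) 0"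
    by (intro has_fps_expansion_fps_expansion) auto
  moreover have "(deriv ^^ n) (\<lambda>t. Digamma (u * t + a)) 0 = u ^ n * Polygamma n a" for n
  proof -
    have "(deriv ^^ n) (\<lambda>t. Digamma (u * t + a)) 0 = u ^ n * (deriv ^^ n) (Polygamma 0) a"
      using higher_deriv_compose_linear'[OF Digamma_hol open_ball[of 0 1] \<open>open H\<close>, where z = 0 and u = u and c = a and n = n] image by simp
    also have "(deriv ^^ n) (Polygamma 0) a = Polygamma n a"
    proof -
      have "a \<notin> \<int>\<^sub>\<le>\<^sub>0"
        using \<open>0 < Re a\<close> by (auto elim!: nonpos_Ints_cases)
      then show ?thesis
        using higher_deriv_Polygamma[where z = a and n = n and m = 0] by simp
    qed
    finally show ?thesis .
  qed
  ultimately show ?thesis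
    by (simp add: fps_expansion_def)
qed

definition digamma_thirds :: "complex \<Rightarrow> complex" where
  "digamma_thirds t =
    Digamma (2/3 - t/3) - Digamma (1/3 - t/3) + Digamma (2/3 + t/3) - Digamma (1/3 + t/3)"

lemma digamma_thirds_mult_cos:
  fixes t :: complex
  assumes "norm t < 1"
  shows "digamma_thirds t * (1 + 2 * cos (of_real (2 * pi / 3) * t)) = of_real (2 * sqrt 3 * pi)"
proof -
  define z w where "z = 1/3 + t/3" and "w = 1/3 - t/3"
  have "\<bar>Re t\<bar> < 1"
    using abs_Re_le_cmod[of t] assms by linarith
  then have "0 < Re z" "Re z < 1" "0 < Re w" "Re w < 1"
    by (auto simp: z_def w_def)
  then have "z \<notin> \<int>" "w \<notin> \<int>"
    by (simp_all add: not_Ints_if_Re_between)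
  define A B where "A = pi * z" and "B = pi * w"
  have sin_nz: "sin A \<noteq> 0" "sin B \<noteq> 0"
    using sin_pi_times_nonzero \<open>z \<notin> \<int>\<close> \<open>w \<notin> \<int>\<close> by (simp_all add: A_def B_def)
  have "A + B = of_real (pi - pi / 3)" "A - B = of_real (2 * pi / 3) * t"
    by (simp_all add: A_def B_def z_def w_def field_simps)
  then have sin_cos: "sin (A + B) = of_real (sqrt 3 / 2)" "cos (A + B) = - 1/2"
    by (simp_all only: sin_of_real cos_of_real sin_pi_minus cos_pi_minus sin_60 cos_60) simp
  \<comment> \<open>by the reflection formula, the four digamma values pair up into two cotangents\<close>
  have "digamma_thirds t = pi * (cot A + cot B)"
    using Digamma_reflection[of z] Digamma_reflection[of w] \<open>z \<notin> \<int>\<close> \<open>w \<notin> \<int>\<close>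
    unfolding digamma_thirds_def by (simp add: A_def B_def z_def w_def algebra_simps)
  moreover have "1 + 2 * cos (of_real (2 * pi / 3) * t) = 4 * (sin A * sin B)"
    using one_plus_two_cos_diff[OF sin_cos(2)] \<open>A - B = _\<close> by simp
  ultimately have "digamma_thirds t * (1 + 2 * cos (of_real (2 * pi / 3) * t)) =
      4 * pi * ((cot A + cot B) * (sin A * sin B))"
    by simp
  also have "\<dots> = 4 * pi * sin (A + B)"
    using cot_add_mult_sin[OF sin_nz] by simp
  finally show ?thesis
    by (simp add: sin_cos)
qed

lemma has_fps_expansion_digamma_thirds:
  "digamma_thirds has_fps_expansion
    Abs_fps (\<lambda>n. ((- 1/3) ^ n + (1/3) ^ n) * (Polygamma n (2/3) - Polygamma n (1/3)) / fact n)"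
proof -
  have "(\<lambda>t::complex. Digamma ((- 1/3) * t + 2/3) - Digamma ((- 1/3) * t + 1/3)
      + Digamma ((1/3) * t + 2/3) - Digamma ((1/3) * t + 1/3)) has_fps_expansion
    Abs_fps (\<lambda>n. (- 1/3) ^ n * Polygamma n (2/3) / fact n) - Abs_fps (\<lambda>n. (- 1/3) ^ n * Polygamma n (1/3) / fact n)
    + Abs_fps (\<lambda>n. (1/3) ^ n * Polygamma n (2/3) / fact n) - Abs_fps (\<lambda>n. (1/3) ^ n * Polygamma n (1/3) / fact n)"
    by (intro has_fps_expansion_add has_fps_expansion_diff has_fps_expansion_Digamma_affine)
      (simp_all add: norm_divide)
  moreover have "(\<lambda>t. Digamma ((- 1/3) * t + 2/3) - Digamma ((- 1/3) * t + 1/3)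
      + Digamma ((1/3) * t + 2/3) - Digamma ((1/3) * t + 1/3)) = digamma_thirds"
    by (simp add: fun_eq_iff digamma_thirds_def algebra_simps)
  moreover have "Abs_fps (\<lambda>n. (- 1/3) ^ n * Polygamma n (2/3) / fact n)
      - Abs_fps (\<lambda>n. (- 1/3) ^ n * Polygamma n (1/3) / fact n)
      + Abs_fps (\<lambda>n. (1/3) ^ n * Polygamma n (2/3) / fact n)
      - Abs_fps (\<lambda>n. (1/3) ^ n * Polygamma n (1/3) / fact n) =
    Abs_fps (\<lambda>n. ((- 1/3) ^ n + (1/3) ^ n) * (Polygamma n (2/3) - Polygamma n (1/3)) / fact n :: complex)"
    by (rule fps_ext) (simp add: field_simps)
  ultimately show ?thesis
    by (simp only:)
qed

lemma digamma_thirds_fps_mult_cos: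
  assumes "digamma_thirds has_fps_expansion F"
  shows "F * (1 + fps_const 2 * fps_cos (of_real (2 * pi / 3))) = fps_const (of_real (2 * sqrt 3 * pi))"
proof -
  have expansion: "(\<lambda>t. digamma_thirds t * (1 + 2 * cos (of_real (2 * pi / 3) * t))) has_fps_expansion
      F * (1 + fps_const 2 * fps_cos (of_real (2 * pi / 3)))"
    using assms by (intro fps_expansion_intros)
  have "\<forall>\<^sub>F t in nhds 0. t \<in> ball (0::complex) 1"
    by (intro eventually_nhds_in_open) auto
  then have locally_constant: "\<forall>\<^sub>F t in nhds 0.
      digamma_thirds t * (1 + 2 * cos (of_real (2 * pi / 3) * t)) = of_real (2 * sqrt 3 * pi)"
    by eventually_elim (rule digamma_thirds_mult_cos, simp)
  from expansion have "(\<lambda>_. of_real (2 * sqrt 3 * pi)) has_fps_expansion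
      F * (1 + fps_const 2 * fps_cos (of_real (2 * pi / 3)))"
    unfolding has_fps_expansion_cong[OF locally_constant refl] .
  then show ?thesis
    using fps_expansion_unique_complex has_fps_expansion_const by blast
qed

section \<open>Odd values of the L-function of the character modulo 3\<close>

definition L_chi3 :: "nat \<Rightarrow> real" where
  "L_chi3 s = progression_sum 3 1 s - progression_sum 3 2 s"

lemma Polygamma_thirds_diff:
  assumes "j \<ge> 1"
  shows "((- 1/3) ^ (2*j) + (1/3) ^ (2*j)) * (Polygamma (2*j) (2/3) - Polygamma (2*j) (1/3)) / fact (2*j)
    = (of_real (6 * L_chi3 (2*j+1)) :: complex)"
proof -
  have "Polygamma (2*j) (r / 3) = - fact (2*j) * 3 ^ (2*j+1) * progression_sum 3 r (2*j+1)"
    if "r > 0" for r :: real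
    using Polygamma_eq_progression_sum[of r 3 "2*j"] assms that by simp
  from this[of 1] this[of 2]
  have "Polygamma (2*j) (2/3) - Polygamma (2*j) (1/3) = fact (2*j) * 3 ^ (2*j+1) * L_chi3 (2*j+1)"
    by (simp add: L_chi3_def algebra_simps)
  moreover have "Polygamma (2*j) (2/3 :: complex) = of_real (Polygamma (2*j) (2/3))"
      "Polygamma (2*j) (1/3 :: complex) = of_real (Polygamma (2*j) (1/3))"
    using Polygamma_of_real[of "2/3" "2*j"] Polygamma_of_real[of "1/3" "2*j"] by simp_all
  moreover have "((- 1/3) ^ (2*j) + (1/3) ^ (2*j) :: complex) * 3 ^ (2*j+1) = 6"
    by (simp add: power_mult_distrib[symmetric] field_simps)
  ultimately show ?thesis
    by (simp add: field_simps)
qed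

lemma digamma_thirds_coeff_bernpoly:
  "- (((- 1/3) ^ (2*j) + (1/3) ^ (2*j)) * (Polygamma (2*j) (2/3) - Polygamma (2*j) (1/3)) / fact (2*j))
    = (2 * pi * \<i>) ^ (2*j) * of_real (2 * fps_nth (bernpoly_fps (1/3)) (2*j+1))
      * of_real (2 * sqrt 3 * pi)"
proof -
  define F where "F = Abs_fps (\<lambda>n. ((- 1/3) ^ n + (1/3) ^ n) * (Polygamma n (2/3) - Polygamma n (1/3))
    / fact n :: complex)"
  define B where "B = (bernpoly_fps (1/3) :: real fps)"
  define c where "c = 2 * pi * \<i>"
  then have c_nz: "c \<noteq> 0"
    by simp
  define D where "D = fps_of_real (B - (B oo - fps_X)) oo (fps_const c * fps_X)"
  define W where "W = 1 + fps_const 2 * fps_cos (of_real (2 * pi / 3) :: complex)"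
  define K where "K = complex_of_real (2 * sqrt 3 * pi)"
  have "F * W = fps_const K"
    unfolding F_def W_def K_def by (rule digamma_thirds_fps_mult_cos[OF has_fps_expansion_digamma_thirds])
  moreover have "D * W = - (fps_const c * fps_X)"
    unfolding D_def W_def B_def c_def by (rule bernpoly_fps_odd_part_scaled)
  \<comment> \<open>both sides equal \<open>F D W\<close>\<close>
  ultimately have "- (fps_const c * (fps_X * F)) = D * fps_const K"
    by (metis mult.assoc mult.commute mult_minus_right mult_minus_left)
  then have "fps_nth (- (fps_const c * (fps_X * F))) (2*j+1) = fps_nth (D * fps_const K) (2*j+1)"
    by (rule arg_cong)
  then have "c * (- fps_nth F (2*j)) = c * (c ^ (2*j) * of_real (2 * fps_nth B (2*j+1)) * K)"
    by (simp add: D_def fps_compose_uminus')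
  then have "- fps_nth F (2*j) = c ^ (2*j) * of_real (2 * fps_nth B (2*j+1)) * K"
    unfolding mult_left_cancel[of c, OF c_nz] .
  then show ?thesis
    by (simp only: F_def B_def c_def K_def fps_nth_Abs_fps)
qed

lemma power_even_two_pi_i: "(2 * pi * \<i>) ^ (2*j) = complex_of_real ((-1) ^ j * (2 * pi) ^ (2*j))"
proof -
  have "(2 * pi * \<i>) ^ 2 = (-1) * complex_of_real ((2 * pi) ^ 2)"
    by (simp add: power_mult_distrib)
  then show ?thesis
    unfolding power_mult power_mult_distrib by simp
qed

lemma L_chi3_odd_bernpoly:
  assumes "j \<ge> 1"
  shows "L_chi3 (2*j+1) =
    (-1) ^ (j+1) * 2 * sqrt 3 * pi / 3 * (2 * pi) ^ (2*j) * (bernpoly (2*j+1) (1/3) / fact (2*j+1))"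
proof -
  define b where "b = fps_nth (bernpoly_fps (1/3) :: real fps) (2*j+1)"
  have "complex_of_real (- (6 * L_chi3 (2*j+1))) =
      - (((- 1/3) ^ (2*j) + (1/3) ^ (2*j)) * (Polygamma (2*j) (2/3) - Polygamma (2*j) (1/3)) / fact (2*j))"
    unfolding Polygamma_thirds_diff[OF assms] by simp
  also have "\<dots> = (2 * pi * \<i>) ^ (2*j) * of_real (2 * b) * of_real (2 * sqrt 3 * pi)"
    unfolding b_def by (rule digamma_thirds_coeff_bernpoly)
  also have "\<dots> = of_real ((-1) ^ j * (2 * pi) ^ (2*j) * (2 * b) * (2 * sqrt 3 * pi))"
    unfolding power_even_two_pi_i by (simp only: of_real_mult)
  finally have L_eq: "- (6 * L_chi3 (2*j+1)) = (-1) ^ j * (2 * pi) ^ (2*j) * (2 * b) * (2 * sqrt 3 * pi)"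
    unfolding of_real_eq_iff .
  have solve: "L = - s * 2 * r * p / 3 * P * b"
    if "- (6 * L) = s * P * (2 * b) * (2 * r * p)" for L s P b r p :: real
    using that by algebra
  have "bernpoly (2*j+1) (1/3) / fact (2*j+1) = b"
    by (simp add: b_def bernpoly_eq_fps_nth del: fact_Suc)
  moreover have "(-1 :: real) ^ (j+1) = - ((-1) ^ j)"
    by simp
  ultimately show ?thesis
    using solve[OF L_eq] by (simp only:)
qed

lemma progression_sum_2_minus_4:
  assumes "j \<ge> 1"
  shows "progression_sum 6 2 (2*j+1) - progression_sum 6 4 (2*j+1) =
    sqrt 3 / 3 * ((-1) ^ (j+1) * pi ^ (2*j+1) / fact (2*j+1) * bernpoly (2*j+1) (1/3))"
proof -
  have "progression_sum (2 * 3) (2 * r) (2*j+1) = progression_sum 3 r (2*j+1) / 2 ^ (2*j+1)"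
    if "r > 0" for r :: real
    using progression_sum_scale[of 2 3 r "2*j+1"] assms that by simp
  from this[of 1] this[of 2]
  have "progression_sum 6 2 (2*j+1) - progression_sum 6 4 (2*j+1) = L_chi3 (2*j+1) / 2 ^ (2*j+1)"
    by (simp add: L_chi3_def diff_divide_distrib)
  also have "\<dots> = sqrt 3 / 3 * ((-1) ^ (j+1) * pi ^ (2*j+1) / fact (2*j+1) * bernpoly (2*j+1) (1/3))"
    unfolding L_chi3_odd_bernpoly[OF assms] by (simp add: power_mult_distrib mult_ac)
  finally show ?thesis .
qed

lemma centered_sum_2_minus_4:
  "centered_sum 6 2 p - centered_sum 6 4 p = sqrt 3 * pi / 36
    - sqrt 3 / 3 * (\<Sum>j=1..p. (-1) ^ (j+1) * pi ^ (2*j+1) / fact (2*j+1) * bernpoly (2*j+1) (1/3))"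
proof -
  have "centered_sum 6 2 p - centered_sum 6 4 p = (centered_sum 6 2 0 - centered_sum 6 4 0)
      - (\<Sum>j=1..p. progression_sum 6 2 (2*j+1) - progression_sum 6 4 (2*j+1))"
    using centered_sum_eq[of 6 2 p] centered_sum_eq[of 6 4 p] by (simp add: sum_subtractf)
  also have "(\<Sum>j=1..p. progression_sum 6 2 (2*j+1) - progression_sum 6 4 (2*j+1)) =
      (\<Sum>j=1..p. sqrt 3 / 3 * ((-1) ^ (j+1) * pi ^ (2*j+1) / fact (2*j+1) * bernpoly (2*j+1) (1/3)))"
    by (rule sum.cong[OF refl], rule progression_sum_2_minus_4) simp
  finally show ?thesis
    by (simp add: centered_sum_0_2_minus_4 sum_distrib_left)
qed

lemma sum_odd_inverse_powers_2_4:
  "(\<Sum>j=1..p. (1 / 2 ^ (2*j+1) + 1 / 4 ^ (2*j+1)) / 2 :: real) =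
    1/12 + 1/120 - 1/3 * (1 / 2 ^ (2*p+2)) - 1/15 * (1 / 2 ^ (4*p+3))"
proof (induction p)
  case (Suc p)
  have powers: "(2::real) ^ (2 * Suc p + 1) = 8 * 4 ^ p" "(4::real) ^ (2 * Suc p + 1) = 64 * 16 ^ p"
    "(2::real) ^ (2 * Suc p + 2) = 16 * 4 ^ p" "(2::real) ^ (2 * p + 2) = 4 * 4 ^ p"
    "(2::real) ^ (4 * Suc p + 3) = 128 * 16 ^ p" "(2::real) ^ (4 * p + 3) = 8 * 16 ^ p"
    by (simp_all add: power_add power_mult)
  have "(4::real) ^ p > 0" "(16::real) ^ p > 0"
    by simp_all
  then show ?case
    unfolding sum.cl_ivl_Suc Suc.IH powers by (simp add: field_simps)
qed simp

lemma progression_sum_6_6_8_10_odd: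
  assumes "j \<ge> 1"
  shows "progression_sum 6 6 (2*j+1) - (progression_sum 6 8 (2*j+1) + progression_sum 6 10 (2*j+1)) / 2 =
    (1 / 2 ^ (2*j+1) + 1 / 4 ^ (2*j+1)) / 2 - 1/4 * ((1 - 1 / 3 ^ (2*j)) / 2 ^ (2*j) * riemann_zeta (2*j+1))"
proof -
  have "(4::real) ^ (2*j+1) = 2 ^ (2*j+1) * 2 ^ (2*j+1)"
    by (simp flip: power_mult_distrib)
  then show ?thesis
    using progression_sum_6_6_8_10[of "2*j+1"] assms by (simp add: field_simps)
qed

lemma centered_sum_6_8_10:
  "centered_sum 6 6 p - (centered_sum 6 8 p + centered_sum 6 10 p) / 2 =
    1/3 * (1 / 2 ^ (2*p+2)) + 1/15 * (1 / 2 ^ (4*p+3)) - 1/2 + 3/8 * ln 3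
    + 1/4 * (\<Sum>j=1..p. (1 - 1 / 3 ^ (2*j)) / 2 ^ (2*j) * riemann_zeta (2*j+1))"
proof -
  have "(\<Sum>j=1..p. progression_sum 6 6 (2*j+1)
        - (progression_sum 6 8 (2*j+1) + progression_sum 6 10 (2*j+1)) / 2) =
      (\<Sum>j=1..p. progression_sum 6 6 (2*j+1))
      - ((\<Sum>j=1..p. progression_sum 6 8 (2*j+1)) + (\<Sum>j=1..p. progression_sum 6 10 (2*j+1))) / 2"
    by (simp add: sum_subtractf sum.distrib flip: sum_divide_distrib)
  moreover have "centered_sum 6 6 p = centered_sum 6 6 0 - (\<Sum>j=1..p. progression_sum 6 6 (2*j+1))"
      "centered_sum 6 8 p = centered_sum 6 8 0 - (\<Sum>j=1..p. progression_sum 6 8 (2*j+1))"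
      "centered_sum 6 10 p = centered_sum 6 10 0 - (\<Sum>j=1..p. progression_sum 6 10 (2*j+1))"
    by (rule centered_sum_eq, simp, simp)+
  ultimately have "centered_sum 6 6 p - (centered_sum 6 8 p + centered_sum 6 10 p) / 2 =
      (centered_sum 6 6 0 - (centered_sum 6 8 0 + centered_sum 6 10 0) / 2)
      - (\<Sum>j=1..p. progression_sum 6 6 (2*j+1)
          - (progression_sum 6 8 (2*j+1) + progression_sum 6 10 (2*j+1)) / 2)"
    by algebra
  also have "(\<Sum>j=1..p. progression_sum 6 6 (2*j+1)
        - (progression_sum 6 8 (2*j+1) + progression_sum 6 10 (2*j+1)) / 2) =
      (\<Sum>j=1..p. (1 / 2 ^ (2*j+1) + 1 / 4 ^ (2*j+1)) / 2
        - 1/4 * ((1 - 1 / 3 ^ (2*j)) / 2 ^ (2*j) * riemann_zeta (2*j+1)))"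
    by (rule sum.cong[OF refl], rule progression_sum_6_6_8_10_odd) simp
  finally show ?thesis
    unfolding centered_sum_0_6_8_10 sum_subtractf sum_odd_inverse_powers_2_4
    by (simp add: sum_distrib_left)
qed

theorem theorem9:
  fixes p :: nat
  shows "((\<Sum>k. 1 / ((6 * real (k+1) - 1) * (6 * real (k+1)) ^ (2*p+1) * (6 * real (k+1) + 1)))
          - 1/2 * ((\<Sum>k. 1 / ((6 * real (k+1) + 1) * (6 * real (k+1) + 2) ^ (2*p+1) * (6 * real (k+1) + 3)))
                 + (\<Sum>k. 1 / ((6 * real (k+1) + 3) * (6 * real (k+1) + 4) ^ (2*p+1) * (6 * real (k+1) + 5))))
        = 1/3 * (1 / 2 ^ (2*p+2)) + 1/15 * (1 / 2 ^ (4*p+3)) - 1/2 + 3/8 * ln 3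
          + 1/4 * (\<Sum>j=1..p. (1 - 1 / 3 ^ (2*j)) / 2 ^ (2*j) * riemann_zeta (2*j+1)))
    \<and> ((\<Sum>k. 1 / ((6 * real k + 1) * (6 * real k + 2) ^ (2*p+1) * (6 * real k + 3)))
          - (\<Sum>k. 1 / ((6 * real k + 3) * (6 * real k + 4) ^ (2*p+1) * (6 * real k + 5)))
        = sqrt 3 * pi / 36
          - sqrt 3 / 3 * (\<Sum>j=1..p. (-1) ^ (j+1) * pi ^ (2*j+1) / fact (2*j+1) * bernpoly (2*j+1) (1/3)))"
proof -
  have "(\<Sum>k. 1 / ((6 * real (k+1) - 1) * (6 * real (k+1)) ^ (2*p+1) * (6 * real (k+1) + 1)))
      = centered_sum 6 6 p"
    "(\<Sum>k. 1 / ((6 * real (k+1) + 1) * (6 * real (k+1) + 2) ^ (2*p+1) * (6 * real (k+1) + 3)))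
      = centered_sum 6 8 p"
    "(\<Sum>k. 1 / ((6 * real (k+1) + 3) * (6 * real (k+1) + 4) ^ (2*p+1) * (6 * real (k+1) + 5)))
      = centered_sum 6 10 p"
    "(\<Sum>k. 1 / ((6 * real k + 1) * (6 * real k + 2) ^ (2*p+1) * (6 * real k + 3))) = centered_sum 6 2 p"
    "(\<Sum>k. 1 / ((6 * real k + 3) * (6 * real k + 4) ^ (2*p+1) * (6 * real k + 5))) = centered_sum 6 4 p"
    unfolding centered_sum_def by (simp_all add: algebra_simps)
  then show ?thesis
    using centered_sum_6_8_10[of p] centered_sum_2_minus_4[of p] by simp
qed

end
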